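(* Let $T$ be a tree of order $n\ge 1$ and let \[ h(T)=\prod_{w\in V(T)}\bigl(d_T(w)+1\bigr)^{d_T(w)+1}. \] Then $h(T)\le 4^{n-1}n^n$, with equality if and only if $T\cong S_n$.
   Context: $d_T(w)$ denotes the degree of vertex $w$ in $T$. $S_n$ denotes the star on $n$ vertices (for $n\le 3$ this coincides with the path on $n$ vertices). *)

theory Defs
  imports Main
begin

definition sgraph :: "'a set \<Rightarrow> 'a set set \<Rightarrow> bool" where
  "sgraph V E \<longleftrightarrow> finite V \<and> (\<forall>e\<in>E. e \<subseteq> V \<and> card e = 2)"

definition degree :: "'a set set \<Rightarrow> 'a \<Rightarrow> nat" where
  "degree E v = card {e \<in> E. v \<in> e}"

definition walk :: "'a set set \<Rightarrow> 'a list \<Rightarrow> bool" where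
  "walk E xs \<longleftrightarrow> (\<forall>i. Suc i < length xs \<longrightarrow> {xs ! i, xs ! Suc i} \<in> E)"

definition connected_graph :: "'a set \<Rightarrow> 'a set set \<Rightarrow> bool" where
  "connected_graph V E \<longleftrightarrow>
     (\<forall>u\<in>V. \<forall>v\<in>V. \<exists>xs. xs \<noteq> [] \<and> hd xs = u \<and> last xs = v \<and> set xs \<subseteq> V \<and> walk E xs)"

definition is_cycle :: "'a set set \<Rightarrow> 'a list \<Rightarrow> bool" where
  "is_cycle E xs \<longleftrightarrow> length xs \<ge> 3 \<and> distinct xs \<and> walk E xs \<and> {last xs, hd xs} \<in> E"

definition is_tree :: "'a set \<Rightarrow> 'a set set \<Rightarrow> bool" where
  "is_tree V E \<longleftrightarrow> sgraph V E \<and> V \<noteq> {} \<and> connected_graph V E \<and>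
     \<not> (\<exists>xs. set xs \<subseteq> V \<and> is_cycle E xs)"

definition star_edges :: "nat \<Rightarrow> nat set set" where
  "star_edges n = {{0, i} | i. 0 < i \<and> i < n}"

definition graph_iso :: "'a set \<Rightarrow> 'a set set \<Rightarrow> 'b set \<Rightarrow> 'b set set \<Rightarrow> bool" where
  "graph_iso V E W F \<longleftrightarrow> (\<exists>f. bij_betw f V W \<and>
     (\<forall>u\<in>V. \<forall>v\<in>V. {u, v} \<in> E \<longleftrightarrow> {f u, f v} \<in> F))"

definition h_index :: "'a set \<Rightarrow> 'a set set \<Rightarrow> nat" where
  "h_index V E = (\<Prod>w\<in>V. (degree E w + 1) ^ (degree E w + 1))"

end

theory Submission
  imports Defs Complex_Main
begin

text \<open>For \<open>n \<ge> 2\<close> every degree is positive, and a vertex of degree \<open>d\<close> contributes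
  \<open>vweight (d - 1)\<close> with \<open>vweight e = (e + 2) ^ (e + 2)\<close>. Convexity of \<open>x log x\<close> makes
  \<open>vweight\<close> strictly log-convex, hence \<open>vweight a * vweight b \<le> vweight 0 * vweight (a + b)\<close>,
  strictly when \<open>a, b > 0\<close>. The excesses \<open>d - 1\<close> of a tree sum to \<open>n - 2\<close>, so merging
  them into one vertex gives \<open>4 h(T) \<le> 4 ^ n * vweight (n - 2) = 4 ^ n * n ^ n\<close>; equality forces
  a single vertex of positive excess, i.e. a vertex of degree \<open>n - 1\<close>, i.e. a star.\<close>

lemma exp_inverse_succ_le:
  fixes x :: real
  assumes "x > 0"
  shows "exp (1 / (x + 1)) \<le> (x + 1) / x"
proof -
  have "x / (x + 1) = 1 + - (1 / (x + 1))"
    using assms by (simp add: field_simps)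
  also have "\<dots> \<le> exp (- (1 / (x + 1)))"
    by (rule exp_ge_add_one_self)
  also have "\<dots> = inverse (exp (1 / (x + 1)))"
    by (rule exp_minus)
  finally have "inverse (inverse (exp (1 / (x + 1)))) \<le> inverse (x / (x + 1))"
    using assms by (intro le_imp_inverse_le) auto
  then show ?thesis by simp
qed

lemma self_power_log_convex:
  fixes k :: nat
  shows "(k + 1) ^ (2 * (k + 1)) < k ^ k * (k + 2) ^ (k + 2)"
proof (cases "k = 0")
  case False
  define a where "a = real k * (real k + 2)"
  have a: "a > 0" using False by (simp add: a_def)
  have "(1 + 1 / a) ^ k \<le> exp (1 / a) ^ k"
    using a by (intro power_mono) (auto simp: add.commute)
  also have "\<dots> = exp (1 / (real k + 2))"
    using False by (simp add: exp_of_nat_mult[symmetric] a_def)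
  also have "\<dots> \<le> (real k + 2) / (real k + 1)"
    using exp_inverse_succ_le[of "real k + 1"] by (simp add: add.assoc)
  finally have growth: "(1 + 1 / a) ^ k \<le> (real k + 2) / (real k + 1)" .
  have square: "(real k + 1) ^ 2 = a * (1 + 1 / a)"
    using a by (simp add: a_def field_simps power2_eq_square)
  have "real ((k + 1) ^ (2 * (k + 1))) = ((real k + 1) ^ 2) ^ k * (real k + 1) ^ 2"
    by (simp add: power_mult[symmetric] power_add[symmetric] algebra_simps)
  also have "\<dots> = (a * (1 + 1 / a)) ^ k * (real k + 1) ^ 2"
    by (simp only: square)
  also have "\<dots> \<le> a ^ k * ((real k + 2) / (real k + 1)) * (real k + 1) ^ 2"
    unfolding power_mult_distrib using growth a by (intro mult_right_mono mult_left_mono) auto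
  also have "\<dots> = a ^ k * (real k + 2) * (real k + 1)"
    by (simp add: power2_eq_square field_simps)
  also have "\<dots> < a ^ k * (real k + 2) * (real k + 2)"
    using a by simp
  also have "\<dots> = real k ^ k * (real k + 2) ^ (k + 2)"
    unfolding a_def power_mult_distrib power_add power2_eq_square by (simp only: mult_ac)
  also have "\<dots> = real (k ^ k * (k + 2) ^ (k + 2))"
    by (simp only: of_nat_mult of_nat_power of_nat_add of_nat_numeral)
  finally show ?thesis by (simp only: of_nat_less_iff)
qed simp

locale strictly_log_convex =
  fixes f :: "nat \<Rightarrow> nat"
  assumes pos: "0 < f x"
    and log_convex: "f (Suc x) * f (Suc x) < f x * f (Suc (Suc x))"
begin

lemma ratio_less: "x < y \<Longrightarrow> f (Suc x) * f y < f x * f (Suc y)"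
proof (induction y)
  case (Suc y)
  show ?case
  proof (cases "x = y")
    case False
    with Suc have "f (Suc x) * f y < f x * f (Suc y)" by simp
    from mult_strict_mono[OF this log_convex[of y]]
    have "(f (Suc x) * f (Suc y)) * (f y * f (Suc y)) < (f x * f (Suc (Suc y))) * (f y * f (Suc y))"
      using pos by (simp add: ac_simps)
    then show ?thesis using pos by simp
  qed (use log_convex in simp)
qed simp

lemma ratio_le: "x \<le> y \<Longrightarrow> f (Suc x) * f y \<le> f x * f (Suc y)"
  using ratio_less[of x y] by (cases "x = y") (auto simp: ac_simps)

lemma mult_le: "f a * f b \<le> f 0 * f (a + b)"
proof (induction b)
  case (Suc b)
  have "(f a * f (Suc b)) * f (a + b) = f a * (f (Suc b) * f (a + b))" by (simp add: ac_simps)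
  also have "\<dots> \<le> f a * (f b * f (Suc (a + b)))" using ratio_le[of b "a + b"] by simp
  also have "\<dots> = (f a * f b) * f (Suc (a + b))" by (simp add: ac_simps)
  also have "\<dots> \<le> (f 0 * f (a + b)) * f (Suc (a + b))" using Suc.IH by simp
  finally show ?case using pos by (simp add: ac_simps)
qed simp

lemma mult_less:
  assumes "0 < a" "0 < b"
  shows "f a * f b < f 0 * f (a + b)"
proof -
  obtain c where b: "b = Suc c" using assms(2) by (cases b) auto
  have "(f a * f b) * f (a + c) = f a * (f (Suc c) * f (a + c))" by (simp add: b ac_simps)
  also have "\<dots> < f a * (f c * f (Suc (a + c)))" using ratio_less[of c "a + c"] assms(1) pos by simp
  also have "\<dots> = (f a * f c) * f (Suc (a + c))" by (simp add: ac_simps)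
  also have "\<dots> \<le> (f 0 * f (a + c)) * f (Suc (a + c))" using mult_le by simp
  finally show ?thesis using pos by (simp add: b ac_simps)
qed

lemma prod_le:
  assumes "finite S"
  shows "f 0 * (\<Prod>w\<in>S. f (e w)) \<le> f 0 ^ card S * f (sum e S)"
  using assms
proof (induction S rule: finite_induct)
  case (insert x S)
  have "f 0 * (\<Prod>w\<in>insert x S. f (e w)) = f (e x) * (f 0 * (\<Prod>w\<in>S. f (e w)))"
    using insert by simp
  also have "\<dots> \<le> f 0 ^ card S * (f (e x) * f (sum e S))"
    using insert.IH by (simp add: ac_simps)
  also have "\<dots> \<le> f 0 ^ card S * (f 0 * f (e x + sum e S))"
    using mult_le by simp
  also have "\<dots> = f 0 ^ card (insert x S) * f (sum e (insert x S))"
    using insert by (simp add: ac_simps)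
  finally show ?case .
qed simp

lemma prod_less:
  assumes "finite S" "u \<in> S" "v \<in> S" "u \<noteq> v" "0 < e u" "0 < e v"
  shows "f 0 * (\<Prod>w\<in>S. f (e w)) < f 0 ^ card S * f (sum e S)"
proof -
  let ?R = "S - {u}"
  have "0 < sum e ?R" using assms member_le_sum[of v ?R e] by fastforce
  then have sup: "f (e u) * f (sum e ?R) < f 0 * f (e u + sum e ?R)"
    using mult_less assms(5) by blast
  have "f 0 * (\<Prod>w\<in>S. f (e w)) = f (e u) * (f 0 * (\<Prod>w\<in>?R. f (e w)))"
    using assms by (simp add: prod.remove)
  also have "\<dots> \<le> f 0 ^ card ?R * (f (e u) * f (sum e ?R))"
    using prod_le[of ?R e] assms(1) by (simp add: ac_simps)
  also have "\<dots> < f 0 ^ card ?R * (f 0 * f (e u + sum e ?R))"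
    using sup pos by simp
  also have "\<dots> = f 0 ^ Suc (card ?R) * f (e u + sum e ?R)"
    by (simp add: ac_simps)
  also have "\<dots> = f 0 ^ card S * f (sum e S)"
    using assms by (simp only: card_Suc_Diff1 sum.remove)
  finally show ?thesis .
qed

end

definition vweight :: "nat \<Rightarrow> nat" where
  "vweight e = (e + 2) ^ (e + 2)"

interpretation vweight: strictly_log_convex vweight
proof
  fix x
  show "0 < vweight x" by (simp add: vweight_def)
  have shift: "Suc x + 2 = x + 2 + 1" "Suc (Suc x) + 2 = x + 2 + 2" by simp_all
  have "vweight (Suc x) * vweight (Suc x) = (x + 2 + 1) ^ (2 * (x + 2 + 1))"
    by (simp only: vweight_def shift mult_2 power_add)
  also have "\<dots> < (x + 2) ^ (x + 2) * (x + 2 + 2) ^ (x + 2 + 2)"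
    by (rule self_power_log_convex)
  also have "\<dots> = vweight x * vweight (Suc (Suc x))"
    by (simp only: vweight_def shift)
  finally show "vweight (Suc x) * vweight (Suc x) < vweight x * vweight (Suc (Suc x))" .
qed

lemma vweight_strict_mono: "strict_mono vweight"
proof (rule strict_monoI)
  fix x y :: nat
  assume "x < y"
  then have "(x + 2) ^ (x + 2) < (y + 2) ^ (x + 2)" by (intro power_strict_mono) auto
  also have "\<dots> \<le> (y + 2) ^ (y + 2)" using \<open>x < y\<close> by (intro power_increasing) auto
  finally show "vweight x < vweight y" by (simp add: vweight_def)
qed

lemma vweight_0 [simp]: "vweight 0 = 4"
  by (simp add: vweight_def)

lemma vweight_diff_2: "2 \<le> n \<Longrightarrow> vweight (n - 2) = n ^ n"
  unfolding vweight_def by (simp only: le_add_diff_inverse2)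

lemma sum_eq_term_if_single_positive:
  fixes e :: "'a \<Rightarrow> nat"
  assumes "finite S" "S \<noteq> {}"
    and single: "\<And>u v. u \<in> S \<Longrightarrow> v \<in> S \<Longrightarrow> 0 < e u \<Longrightarrow> 0 < e v \<Longrightarrow> u = v"
  obtains c where "c \<in> S" "sum e S = e c"
proof -
  obtain c where c: "c \<in> S" and others: "\<forall>w\<in>S - {c}. e w = 0"
  proof (cases "\<exists>c\<in>S. 0 < e c")
    case True
    then obtain c where c: "c \<in> S" "0 < e c" by blast
    have "e w = 0" if "w \<in> S - {c}" for w using single[of w c] that c by auto
    with c(1) show ?thesis using that by blast
  next
    case False
    then have "\<forall>w\<in>S - {c}. e w = 0" for c by auto
    with assms(2) show ?thesis using that by blast
  qed
  have "sum e S = e c + sum e (S - {c})" using assms(1) c by (rule sum.remove)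
  with c others show ?thesis using that by simp
qed

lemma sgraph_finite_edges: "sgraph V E \<Longrightarrow> finite E"
  unfolding sgraph_def by (meson Pow_iff finite_Pow_iff finite_subset subsetI)

lemma sgraph_edgeE:
  assumes "sgraph V E" "e \<in> E"
  obtains u v where "e = {u, v}" "u \<noteq> v" "u \<in> V" "v \<in> V"
  using assms unfolding sgraph_def by (metis card_2_iff insert_subset)

lemma sgraph_singleton_no_edges:
  assumes "sgraph {c} E"
  shows "E = {}"
proof (rule equals0I)
  fix e assume "e \<in> E"
  with assms obtain u v where "u \<noteq> v" "u \<in> {c}" "v \<in> {c}" by (rule sgraph_edgeE)
  then show False by simp
qed

lemma sum_degree:
  assumes "sgraph V E"
  shows "(\<Sum>w\<in>V. degree E w) = 2 * card E"
proof -
  have fin: "finite V" "finite E" using assms sgraph_finite_edges by (auto simp: sgraph_def)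
  have "(\<Sum>w\<in>V. degree E w) = (\<Sum>w\<in>V. \<Sum>e\<in>E. if w \<in> e then 1 else 0)"
    unfolding degree_def using fin by (simp add: sum.inter_filter[symmetric])
  also have "\<dots> = (\<Sum>e\<in>E. \<Sum>w\<in>V. if w \<in> e then 1 else 0)"
    by (rule sum.swap)
  also have "\<dots> = (\<Sum>e\<in>E. card {w \<in> V. w \<in> e})"
    using fin by (simp add: sum.inter_filter[symmetric])
  also have "\<dots> = (\<Sum>e\<in>E. 2)"
  proof (rule sum.cong)
    fix e assume "e \<in> E"
    then have "{w \<in> V. w \<in> e} = e" "card e = 2" using assms by (auto simp: sgraph_def)
    then show "card {w \<in> V. w \<in> e} = 2" by simp
  qed simp
  finally show ?thesis by simp
qed

lemma walk_mono: "E \<subseteq> E' \<Longrightarrow> walk E xs \<Longrightarrow> walk E' xs"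
  unfolding walk_def by blast

lemma walk_drop: "walk E xs \<Longrightarrow> walk E (drop i xs)"
  unfolding walk_def by (auto simp: add.commute[of i])

lemma walk_snoc: "walk E xs \<Longrightarrow> xs \<noteq> [] \<Longrightarrow> {last xs, u} \<in> E \<Longrightarrow> walk E (xs @ [u])"
  unfolding walk_def by (auto simp: nth_append last_conv_nth less_Suc_eq dest: sym)

definition forest :: "'a set \<Rightarrow> 'a set set \<Rightarrow> bool" where
  "forest V E \<longleftrightarrow> sgraph V E \<and> \<not> (\<exists>xs. set xs \<subseteq> V \<and> is_cycle E xs)"

lemma tree_imp_forest: "is_tree V E \<Longrightarrow> forest V E"
  unfolding is_tree_def forest_def by blast

lemma forest_no_back_edge:
  assumes F: "forest V E" and xs: "distinct xs" "set xs \<subseteq> V" "walk E xs"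
    and i: "i + 2 < length xs" and closing: "{last xs, xs ! i} \<in> E"
  shows False
proof -
  have "is_cycle E (drop i xs)"
    unfolding is_cycle_def using xs i closing by (simp add: walk_drop last_drop hd_drop_conv_nth)
  moreover have "set (drop i xs) \<subseteq> V"
    using xs(2) by (meson set_drop_subset subset_trans)
  ultimately show False
    using F unfolding forest_def by blast
qed

lemma forest_path_end_edge:
  assumes F: "forest V E"
    and path: "distinct xs" "set xs \<subseteq> V" "walk E xs" "2 \<le> length xs"
    and maximal: "\<And>u. u \<in> V \<Longrightarrow> {last xs, u} \<in> E \<Longrightarrow> u \<in> set xs"
    and e: "e \<in> E" "last xs \<in> e"
  shows "e = {xs ! (length xs - 2), last xs}"
proof -
  let ?k = "length xs" and ?v = "last xs"
  have G: "sgraph V E" using F by (simp add: forest_def)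
  obtain x y where xy: "e = {x, y}" "x \<noteq> y" "x \<in> V" "y \<in> V"
    using G e(1) by (rule sgraph_edgeE)
  define u where "u = (if x = ?v then y else x)"
  have u: "e = {?v, u}" "u \<noteq> ?v" "u \<in> V" using xy e(2) by (auto simp: u_def)
  then obtain i where i: "i < ?k" "xs ! i = u"
    using maximal e(1) by (metis in_set_conv_nth)
  have "xs \<noteq> []" using path(4) by auto
  then have "i \<noteq> ?k - 1" using i u(2) by (auto simp: last_conv_nth)
  moreover have "\<not> i + 2 < ?k"
    using forest_no_back_edge[OF F path(1-3), of i] e(1) u(1) i(2) by auto
  ultimately have "i = ?k - 2" using i by linarith
  then show ?thesis using i u(1) by (simp add: insert_commute)
qed

text \<open>The last vertex of a longest path is a leaf.\<close>

lemma forest_has_leaf: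
  assumes F: "forest V E" and "E \<noteq> {}"
  obtains v p where "v \<in> V" "p \<noteq> v" "{e \<in> E. v \<in> e} = {{p, v}}"
proof -
  have G: "sgraph V E" using F by (simp add: forest_def)
  define P where "P xs \<longleftrightarrow> distinct xs \<and> set xs \<subseteq> V \<and> walk E xs \<and> 2 \<le> length xs" for xs
  obtain e0 where "e0 \<in> E" using \<open>E \<noteq> {}\<close> by blast
  with G obtain a b where "e0 = {a, b}" "a \<noteq> b" "a \<in> V" "b \<in> V" by (rule sgraph_edgeE)
  with \<open>e0 \<in> E\<close> have "P [a, b]" by (simp add: P_def walk_def)
  moreover have "length ys < Suc (card V)" if "P ys" for ys
  proof -
    have "length ys = card (set ys)" using that by (simp add: P_def distinct_card)
    also have "\<dots> \<le> card V" using that G by (intro card_mono) (auto simp: P_def sgraph_def)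
    finally show ?thesis by simp
  qed
  ultimately obtain xs where xs: "P xs" and longest: "\<And>ys. P ys \<Longrightarrow> length ys \<le> length xs"
    using ex_has_greatest_nat[of P "[a, b]" length] by blast
  let ?k = "length xs" and ?v = "last xs"
  define p where "p = xs ! (?k - 2)"
  have path: "distinct xs" "set xs \<subseteq> V" "walk E xs" "2 \<le> ?k" and "xs \<noteq> []"
    using xs by (auto simp: P_def)
  have maximal: "u \<in> set xs" if "u \<in> V" "{?v, u} \<in> E" for u
  proof (rule ccontr)
    assume "u \<notin> set xs"
    then have "P (xs @ [u])" using xs that walk_snoc[OF path(3) \<open>xs \<noteq> []\<close>] by (simp add: P_def)
    then show False using longest[of "xs @ [u]"] by simp
  qed
  have "{xs ! (?k - 2), xs ! Suc (?k - 2)} \<in> E" using path(3,4) by (simp add: walk_def)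
  then have "{p, ?v} \<in> E"
    using path(4) \<open>xs \<noteq> []\<close> by (simp add: p_def last_conv_nth Suc_diff_Suc numeral_2_eq_2)
  moreover have "p \<noteq> ?v"
    using path(1,4) \<open>xs \<noteq> []\<close> by (simp add: p_def last_conv_nth nth_eq_iff_index_eq)
  moreover have "e = {p, ?v}" if "e \<in> E" "?v \<in> e" for e
    unfolding p_def by (rule forest_path_end_edge[OF F path maximal that])
  ultimately have "{e \<in> E. ?v \<in> e} = {{p, ?v}}" by blast
  moreover have "?v \<in> V" using path(2) \<open>xs \<noteq> []\<close> by auto
  ultimately show ?thesis using that \<open>p \<noteq> ?v\<close> by blast
qed

lemma forest_delete_vertex:
  assumes "forest V E"
  shows "forest (V - {v}) {e \<in> E. v \<notin> e}"
proof -
  have G: "sgraph V E" and acyclic: "\<not> (\<exists>xs. set xs \<subseteq> V \<and> is_cycle E xs)"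
    using assms by (auto simp: forest_def)
  have "sgraph (V - {v}) {e \<in> E. v \<notin> e}" using G by (auto simp: sgraph_def)
  moreover have "is_cycle E xs" if "is_cycle {e \<in> E. v \<notin> e} xs" for xs
    using that walk_mono[of "{e \<in> E. v \<notin> e}" E] by (auto simp: is_cycle_def)
  ultimately show ?thesis using acyclic unfolding forest_def by blast
qed

lemma forest_card_edges_less:
  assumes "forest V E" "V \<noteq> {}"
  shows "card E < card V"
  using assms
proof (induction "card V" arbitrary: V E rule: less_induct)
  case less
  have fin: "finite V" "finite E"
    using less.prems(1) sgraph_finite_edges by (auto simp: forest_def sgraph_def)
  show ?case
  proof (cases "E = {}")
    case False
    then obtain v p where v: "v \<in> V" "p \<noteq> v" and leaf: "{e \<in> E. v \<in> e} = {{p, v}}"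
      using forest_has_leaf[OF less.prems(1)] by blast
    have edge: "{p, v} \<in> E" using leaf by blast
    then have "p \<in> V" using less.prems(1) unfolding forest_def sgraph_def by blast
    have smaller: "card (V - {v}) < card V" using fin(1) v(1) by (rule card_Diff1_less)
    have "V - {v} \<noteq> {}" using \<open>p \<in> V\<close> v(2) by blast
    with smaller have "card {e \<in> E. v \<notin> e} < card (V - {v})"
      by (rule less.hyps[OF _ forest_delete_vertex[OF less.prems(1)]])
    moreover have "{e \<in> E. v \<notin> e} = E - {{p, v}}" using leaf by blast
    moreover have "card (E - {{p, v}}) = card E - 1" "card (V - {v}) = card V - 1"
      using edge v(1) by simp_all
    moreover have "0 < card E" using fin(2) edge card_gt_0_iff by blast
    ultimately show ?thesis by simp
  qed (use fin less.prems(2) in \<open>simp add: card_gt_0_iff\<close>)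
qed

lemma tree_degree_pos:
  assumes T: "is_tree V E" and "2 \<le> card V" and v: "v \<in> V"
  shows "0 < degree E v"
proof -
  have "\<not> V \<subseteq> {v}" using card_mono[of "{v}" V] \<open>2 \<le> card V\<close> by auto
  then obtain u where u: "u \<in> V" "u \<noteq> v" by blast
  obtain xs where xs: "xs \<noteq> []" "hd xs = v" "last xs = u" "walk E xs"
    using T u v unfolding is_tree_def connected_graph_def by blast
  have "Suc 0 < length xs"
    using xs u by (cases xs) auto
  then have "{xs ! 0, xs ! Suc 0} \<in> E" using xs(4) by (simp add: walk_def)
  moreover have "xs ! 0 = v" using xs(1,2) by (simp add: hd_conv_nth)
  ultimately have "{xs ! 0, xs ! Suc 0} \<in> {e \<in> E. v \<in> e}" by simp
  moreover have "finite E" using T sgraph_finite_edges unfolding is_tree_def by blast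
  ultimately show ?thesis unfolding degree_def by (auto simp: card_gt_0_iff)
qed

definition star_at :: "'a \<Rightarrow> 'a set \<Rightarrow> 'a set set" where
  "star_at c V = (\<lambda>x. {c, x}) ` (V - {c})"

lemma card_star_at:
  assumes "finite V" "c \<in> V"
  shows "card (star_at c V) = card V - 1"
proof -
  have "inj_on (\<lambda>x. {c, x}) (V - {c})" by (rule inj_onI) (auto simp: doubleton_eq_iff)
  then show ?thesis using assms by (simp add: star_at_def card_image)
qed

lemma degree_star_at_centre:
  assumes "finite V" "c \<in> V"
  shows "degree (star_at c V) c = card V - 1"
proof -
  have "{e \<in> star_at c V. c \<in> e} = star_at c V" by (auto simp: star_at_def)
  then show ?thesis using card_star_at[OF assms] by (simp add: degree_def)
qed

lemma degree_star_at_leaf: "x \<in> V - {c} \<Longrightarrow> degree (star_at c V) x = 1"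
proof -
  assume "x \<in> V - {c}"
  then have "{e \<in> star_at c V. x \<in> e} = {{c, x}}" by (auto simp: star_at_def)
  then show ?thesis by (simp add: degree_def)
qed

lemma h_index_star_at:
  assumes "finite V" "c \<in> V" "card V = n"
  shows "h_index V (star_at c V) = 4 ^ (n - 1) * n ^ n"
proof -
  have "0 < n" using assms card_gt_0_iff by blast
  then have centre: "degree (star_at c V) c + 1 = n"
    using assms degree_star_at_centre[OF assms(1,2)] by simp
  have leaves: "(\<Prod>w\<in>V - {c}. (degree (star_at c V) w + 1) ^ (degree (star_at c V) w + 1)) =
      (\<Prod>w\<in>V - {c}. 4)"
    by (intro prod.cong) (simp_all add: degree_star_at_leaf)
  have "h_index V (star_at c V) =
      (degree (star_at c V) c + 1) ^ (degree (star_at c V) c + 1) * (\<Prod>w\<in>V - {c}. 4)"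
    unfolding h_index_def leaves[symmetric] using assms(1,2) by (rule prod.remove)
  then show ?thesis using assms by (simp only: centre) simp
qed

lemma star_edges_eq_star_at: "star_edges n = star_at 0 {0..<n}"
  by (auto simp: star_edges_def star_at_def)

lemma doubleton_mem_star_at:
  "{u, v} \<in> star_at c V \<longleftrightarrow> (u = c \<and> v \<in> V - {c}) \<or> (v = c \<and> u \<in> V - {c})"
  unfolding star_at_def image_iff doubleton_eq_iff by blast

lemma bij_betw_doubleton_mem_star_at:
  assumes f: "bij_betw f V W" and "c \<in> V" "u \<in> V" "v \<in> V"
  shows "{f u, f v} \<in> star_at (f c) W \<longleftrightarrow> {u, v} \<in> star_at c V"
proof -
  have "f x = f c \<longleftrightarrow> x = c" "f x \<in> W" if "x \<in> V" for x
    using f that \<open>c \<in> V\<close> by (auto simp: bij_betw_def inj_on_eq_iff)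
  then show ?thesis using assms(3,4) by (auto simp: doubleton_mem_star_at)
qed

lemma star_at_graph_iso:
  assumes "finite V" "c \<in> V" "card V = n"
  shows "graph_iso V (star_at c V) {0..<n} (star_edges n)"
proof -
  obtain g where g: "bij_betw g (V - {c}) {1..<n}"
    using assms finite_same_card_bij[of "V - {c}" "{1..<n}"] by auto
  define f where "f x = (if x = c then 0 else g x)" for x
  have "bij_betw f (V - {c}) {1..<n}"
    using g by (rule bij_betw_cong[THEN iffD1, rotated]) (auto simp: f_def)
  then have "bij_betw f ((V - {c}) \<union> {c}) ({1..<n} \<union> {f c})"
    by (intro notIn_Un_bij_betw) (auto simp: f_def)
  moreover have "(V - {c}) \<union> {c} = V" "{1..<n} \<union> {f c} = {0..<n}"
    using assms by (auto simp: f_def card_gt_0_iff)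
  ultimately have bij: "bij_betw f V {0..<n}" by simp
  show ?thesis
    unfolding graph_iso_def star_edges_eq_star_at
    using bij bij_betw_doubleton_mem_star_at[OF bij \<open>c \<in> V\<close>] by (auto simp: f_def)
qed

lemma graph_iso_star_edges_imp_star_at:
  assumes G: "sgraph V E" and iso: "graph_iso V E {0..<n} (star_edges n)" and "V \<noteq> {}"
  shows "\<exists>c\<in>V. E = star_at c V"
proof -
  obtain f where f: "bij_betw f V {0..<n}"
    and edges: "\<And>u v. u \<in> V \<Longrightarrow> v \<in> V \<Longrightarrow> {u, v} \<in> E \<longleftrightarrow> {f u, f v} \<in> star_at 0 {0..<n}"
    using iso unfolding graph_iso_def star_edges_eq_star_at by blast
  have "0 \<in> f ` V" using f \<open>V \<noteq> {}\<close> by (auto simp: bij_betw_def)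
  then obtain c where c: "c \<in> V" "f c = 0" by (metis imageE)
  have same: "{u, v} \<in> E \<longleftrightarrow> {u, v} \<in> star_at c V" if "u \<in> V" "v \<in> V" for u v
    using edges[OF that] bij_betw_doubleton_mem_star_at[OF f c(1) that] c(2) by simp
  have "E = star_at c V"
  proof (intro set_eqI iffI)
    fix e assume "e \<in> E"
    with G obtain u v where "e = {u, v}" "u \<in> V" "v \<in> V" by (rule sgraph_edgeE)
    with same \<open>e \<in> E\<close> show "e \<in> star_at c V" by blast
  next
    fix e assume "e \<in> star_at c V"
    then obtain x where "e = {c, x}" "x \<in> V" by (auto simp: star_at_def)
    with same c(1) \<open>e \<in> star_at c V\<close> show "e \<in> E" by blast
  qed
  with c show ?thesis by blast
qed

lemma full_degree_star_at:
  assumes G: "sgraph V E" and c: "c \<in> V" and deg: "degree E c = card V - 1"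
    and few: "card E < card V"
  shows "E = star_at c V"
proof -
  have fin: "finite V" "finite E" using G sgraph_finite_edges by (auto simp: sgraph_def)
  have at_c: "{e \<in> E. c \<in> e} \<subseteq> star_at c V"
  proof
    fix e assume e: "e \<in> {e \<in> E. c \<in> e}"
    with G obtain u v where uv: "e = {u, v}" "u \<noteq> v" "u \<in> V" "v \<in> V"
      by (blast elim: sgraph_edgeE)
    define x where "x = (if u = c then v else u)"
    have "e = {c, x}" "x \<in> V - {c}" using uv e by (auto simp: x_def)
    then show "e \<in> star_at c V" unfolding star_at_def by blast
  qed
  have "card {e \<in> E. c \<in> e} = card (star_at c V)"
    using deg card_star_at[OF fin(1) c] by (simp add: degree_def)
  then have "{e \<in> E. c \<in> e} = star_at c V"
    using fin(1) at_c by (intro card_subset_eq) (simp_all add: star_at_def)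
  moreover have "{e \<in> E. c \<in> e} = E"
  proof (rule card_subset_eq[OF fin(2)])
    show "card {e \<in> E. c \<in> e} = card E"
      using deg few card_mono[OF fin(2), of "{e \<in> E. c \<in> e}"] by (simp add: degree_def)
  qed blast
  ultimately show ?thesis by simp
qed

lemma tree_h_index_eq_prod_vweight:
  assumes "is_tree V E" "2 \<le> card V"
  shows "h_index V E = (\<Prod>w\<in>V. vweight (degree E w - 1))"
  unfolding h_index_def vweight_def
  using tree_degree_pos[OF assms] by (intro prod.cong) (auto simp: Suc_le_eq)

lemma tree_excess_sum_le:
  assumes T: "is_tree V E" and n: "2 \<le> card V"
  shows "(\<Sum>w\<in>V. degree E w - 1) \<le> card V - 2"
proof -
  have G: "sgraph V E" and "V \<noteq> {}" using T by (auto simp: is_tree_def)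
  have "(\<Sum>w\<in>V. degree E w - 1) + card V = (\<Sum>w\<in>V. degree E w - 1 + 1)"
    by (simp only: sum.distrib card_eq_sum)
  also have "\<dots> = (\<Sum>w\<in>V. degree E w)"
    using tree_degree_pos[OF T n] by (intro sum.cong) auto
  also have "\<dots> = 2 * card E" using G by (rule sum_degree)
  finally show ?thesis
    using forest_card_edges_less[OF tree_imp_forest[OF T] \<open>V \<noteq> {}\<close>] by linarith
qed

lemma tree_h_index_le_vweight:
  assumes "is_tree V E" "2 \<le> card V"
  shows "4 * h_index V E \<le> 4 ^ card V * vweight (\<Sum>w\<in>V. degree E w - 1)"
  using vweight.prod_le[of V "\<lambda>w. degree E w - 1"] assms
  by (simp add: tree_h_index_eq_prod_vweight is_tree_def sgraph_def)

lemma vweight_star_bound: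
  assumes "2 \<le> n"
  shows "4 ^ n * vweight (n - 2) = 4 * (4 ^ (n - 1) * n ^ n)"
proof -
  have "(4::nat) ^ n = 4 ^ Suc (n - 1)" using assms by simp
  also have "\<dots> = 4 * 4 ^ (n - 1)" by (rule power_Suc)
  finally show ?thesis by (simp only: vweight_diff_2[OF assms] mult.assoc)
qed

lemma tree_h_index_le:
  assumes T: "is_tree V E" and n: "card V = n" "2 \<le> n"
  shows "h_index V E \<le> 4 ^ (n - 1) * n ^ n"
proof -
  have "4 * h_index V E \<le> 4 ^ n * vweight (\<Sum>w\<in>V. degree E w - 1)"
    using tree_h_index_le_vweight[OF T] n by simp
  also have "\<dots> \<le> 4 ^ n * vweight (n - 2)"
    using tree_excess_sum_le[OF T] n vweight_strict_mono by (simp add: strict_mono_less_eq)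
  also have "\<dots> = 4 * (4 ^ (n - 1) * n ^ n)"
    using n(2) by (rule vweight_star_bound)
  finally show ?thesis by simp
qed

lemma tree_h_index_eq_imp_star_at:
  assumes T: "is_tree V E" and n: "card V = n" "2 \<le> n"
    and eq: "h_index V E = 4 ^ (n - 1) * n ^ n"
  shows "\<exists>c\<in>V. E = star_at c V"
proof -
  define e where "e w = degree E w - 1" for w
  have G: "sgraph V E" and fin: "finite V" using T by (auto simp: is_tree_def sgraph_def)
  have top: "4 * h_index V E = 4 ^ n * vweight (n - 2)"
    using eq n by (simp add: vweight_star_bound)
  have prod: "h_index V E = (\<Prod>w\<in>V. vweight (e w))"
    using tree_h_index_eq_prod_vweight[OF T] n by (simp add: e_def)
  have sum: "sum e V = n - 2"
  proof (rule ccontr)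
    assume "sum e V \<noteq> n - 2"
    then have "sum e V < n - 2" using tree_excess_sum_le[OF T] n unfolding e_def by linarith
    then have "vweight (sum e V) < vweight (n - 2)" by (rule strict_monoD[OF vweight_strict_mono])
    moreover have "4 * h_index V E \<le> 4 ^ n * vweight (sum e V)"
      using tree_h_index_le_vweight[OF T] n by (simp add: e_def)
    ultimately show False using top by simp
  qed
  have single: "u = v" if "u \<in> V" "v \<in> V" "0 < e u" "0 < e v" for u v
  proof (rule ccontr)
    assume "u \<noteq> v"
    from vweight.prod_less[OF fin that(1,2) this that(3,4)]
    show False using prod sum top n by simp
  qed
  have "V \<noteq> {}" using n by auto
  then obtain c where c: "c \<in> V" "sum e V = e c"
    using single by (rule sum_eq_term_if_single_positive[OF fin])
  then have "degree E c = card V - 1"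
    using tree_degree_pos[OF T _ c(1)] sum n by (simp add: e_def)
  then show ?thesis
    using full_degree_star_at[OF G c(1)] forest_card_edges_less[OF tree_imp_forest[OF T]] c(1)
    by blast
qed

theorem lemma2p8:
  fixes V :: "'a set" and E :: "'a set set" and n :: nat
  assumes "is_tree V E" and "card V = n" and "n \<ge> 1"
  shows "h_index V E \<le> 4 ^ (n - 1) * n ^ n \<and>
         (h_index V E = 4 ^ (n - 1) * n ^ n \<longleftrightarrow> graph_iso V E {0..<n} (star_edges n))"
proof -
  have G: "sgraph V E" and fin: "finite V" and ne: "V \<noteq> {}"
    using assms(1) by (auto simp: is_tree_def sgraph_def)
  have star_iff: "graph_iso V E {0..<n} (star_edges n) \<longleftrightarrow> (\<exists>c\<in>V. E = star_at c V)"
    using graph_iso_star_edges_imp_star_at[OF G _ ne] star_at_graph_iso[OF fin _ assms(2)] by blast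
  have star_h: "h_index V E = 4 ^ (n - 1) * n ^ n" if "\<exists>c\<in>V. E = star_at c V"
    using that h_index_star_at[OF fin _ assms(2)] by blast
  show ?thesis
  proof (cases "n = 1")
    case True
    then obtain c where "V = {c}" using assms(2) card_1_singletonE by blast
    with G have "E = star_at c V" by (simp add: sgraph_singleton_no_edges star_at_def)
    then show ?thesis using star_h star_iff \<open>V = {c}\<close> by auto
  next
    case False
    then have "2 \<le> n" using assms(3) by simp
    then show ?thesis
      using tree_h_index_le tree_h_index_eq_imp_star_at star_h star_iff assms(1,2) by blast
  qed
qed

end
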